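(* Under Conditions 1 and 2, for every $\vartheta>0$ there exist constants $n_\vartheta\ge1$ and $\epsilon>0$ such that for all $n\ge n_\vartheta$ and all $u\in\mathbb R$ with $|u|\ge\vartheta$, $$\Big|1-\lambda^{(n)}m^{(n)}\int_0^\infty e^{\mathrm iut}\,\bar\Lambda^{(n)}_\beta(t)\,dt\Big|\ge\epsilon .$$
   Context: Notation: $\mathbb Z_+=\{1,2,\dots\}$, $\mathbb R_+=[0,\infty)$. For each $n\ge1$: $\lambda^{(n)}>0$; a probability $\Lambda^{(n)}$ on $\mathbb R_+$ with tail $\bar\Lambda^{(n)}(t)=\Lambda^{(n)}((t,\infty))$, $\eta^{(n)}=\int_0^\infty y\Lambda^{(n)}(dy)$, $\sigma^{(n)}=\frac12\int_0^\infty y^2\Lambda^{(n)}(dy)$ finite; probability laws $(p_k^{(n)})_{k\ge1}$, $(q_k^{(n)})_{k\ge1}$ on $\mathbb Z_+$ with generating functions $g^{(n)},h^{(n)}$, $m^{(n)}=\sum_kkp_k^{(n)}<\infty$; $\gamma_n>0$ with $\gamma_n\to\infty$, $\gamma_n/n\to\gamma_*\in[0,\infty)$. $\phi^{(n)}(z)=n\gamma_n[g^{(n)}(1-z/n)-(1-z/n)]$, $\psi^{(n)}(z)=\gamma_n[1-h^{(n)}(1-z/n)]$ for $z\in[0,n]$. Condition 1: (i) $\lambda^{(n)}\to\lambda>0$, $\eta^{(n)}\to\eta>0$, $\sigma^{(n)}\to\sigma>0$, $\gamma_n(1-\lambda^{(n)}\eta^{(n)})\to b\in\mathbb R$; (ii)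 $\psi^{(n)}\to\psi$ uniformly on compacts of $[0,\infty)$; (iii) $\{\phi^{(n)}\}$ is uniformly Lipschitz on bounded intervals and converges uniformly on compacts to a continuous $\phi$. Under Condition 1, $\lambda\eta=1$ and $m:=\lim_n\gamma_n(1-m^{(n)})$ exists (so $\gamma_n(1-\lambda^{(n)}\eta^{(n)}m^{(n)})\to b+m$). Condition 2 (for some $\alpha\in(1,2)$): (1) there are $C,k_0>0$ with $n\gamma_n\sum_{k\ge k_0}(k/n)^\alpha p^{(n)}_k+\sum_kk^\alpha q^{(n)}_k\le C$ for all $n$, and $\lim_{k_1\to\infty}\limsup_n\gamma_n\sum_{k\ge k_1}kp^{(n)}_k=0$; (2) there are $C_0>0$ and a probability $\Lambda^*$ on $\mathbb R_+$ with $\int t^{2\alpha}\Lambda^*(dt)<\infty$ and $\bar\Lambda^{(n)}\le C_0\bar\Lambda^*$ for all $n$. Fix $\beta\in[0,\infty)$ with $\beta>-(b+m)/(\sigma\lambda)$. Define $\bar\Lambda_\beta^{(n)}(t)=e^{-\beta t/\gamma_n}\bar\Lambda^{(n)}(t)$. *)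

theory Defs
  imports "HOL-Probability.Probability"
begin

definition tail :: "real measure \<Rightarrow> real \<Rightarrow> real" where
  "tail M t = measure M {t<..}"

definition prob_on_Rplus :: "real measure \<Rightarrow> bool" where
  "prob_on_Rplus M \<longleftrightarrow> prob_space M \<and> sets M = sets borel \<and> emeasure M {..<0} = 0"

definition prob_on_Zplus :: "(nat \<Rightarrow> real) \<Rightarrow> bool" where
  "prob_on_Zplus p \<longleftrightarrow> (\<forall>k. p k \<ge> 0) \<and> p 0 = 0 \<and> p sums 1"

definition pgf :: "(nat \<Rightarrow> real) \<Rightarrow> real \<Rightarrow> real" where
  "pgf p s = (\<Sum>k. p k * s ^ k)"

definition mean_Z :: "(nat \<Rightarrow> real) \<Rightarrow> real" where
  "mean_Z p = (\<Sum>k. real k * p k)"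

definition phi_n :: "(nat \<Rightarrow> real) \<Rightarrow> real \<Rightarrow> nat \<Rightarrow> real \<Rightarrow> real" where
  "phi_n p g n z = real n * g * (pgf p (1 - z / real n) - (1 - z / real n))"

definition psi_n :: "(nat \<Rightarrow> real) \<Rightarrow> real \<Rightarrow> nat \<Rightarrow> real \<Rightarrow> real" where
  "psi_n q g n z = g * (1 - pgf q (1 - z / real n))"

end

theory Submission
  imports Defs
begin

text \<open>Only the real part is estimated. With \<open>G t = exp (-\<beta> t / \<gamma>) \<bar>\<Lambda>(t) \<le> \<bar>\<Lambda>(t)\<close>,
  \<open>Re (1 - \<lambda> m \<integral> e^(i u t) G) = 1 - \<lambda> m \<integral> G + \<lambda> m \<integral> (1 - cos (u t)) G\<close>.
  The first integral is at most \<open>\<integral> \<bar>\<Lambda> = \<eta>\<close>, and \<open>\<lambda> m \<eta> \<le> 1 + o(1)\<close>: the Lipschitz bound on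
  \<open>\<phi>\<close> at \<open>0\<close> gives \<open>m \<le> 1 + L / \<gamma>\<close>, and \<open>\<gamma> (1 - \<lambda> \<eta>)\<close> converges. For the second,
  the first two moments of \<open>\<Lambda>\<close> give a uniform bound \<open>\<bar>\<Lambda>(a) \<ge> c > 0\<close>, so
  \<open>G \<ge> exp (-\<beta> a) c\<close> on \<open>[0, a]\<close>, while \<open>\<integral>\<^sub>0\<^sup>a (1 - cos (u t)) dt = a (1 - sin (u a) / (u a))\<close>
  is bounded below uniformly in \<open>\<bar>u\<bar> \<ge> \<theta>\<close>.\<close>

lemma tail_nonneg: "0 \<le> tail M t"
  by (simp add: tail_def)

lemma tail_antimono:
  assumes "prob_on_Rplus M" "t \<le> s"
  shows "tail M s \<le> tail M t"
proof -
  interpret prob_space M using assms(1) by (simp add: prob_on_Rplus_def)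
  have "sets M = sets borel" using assms(1) by (simp add: prob_on_Rplus_def)
  then show ?thesis unfolding tail_def
    using assms(2) by (intro finite_measure_mono) auto
qed

lemma borel_measurable_tail:
  assumes "prob_on_Rplus M"
  shows "tail M \<in> borel_measurable borel"
proof -
  have "mono (\<lambda>t. - tail M t)"
    by (auto simp: mono_def intro!: tail_antimono[OF assms])
  then have "(\<lambda>t. - (- tail M t)) \<in> borel_measurable borel"
    by (intro borel_measurable_uminus borel_measurable_mono)
  then show ?thesis by simp
qed

text \<open>Layer-cake formula: by Tonelli, both sides are the measure of \<open>{(t, x). 0 \<le> t < x}\<close>.\<close>

lemma nn_integral_tail:
  assumes "prob_on_Rplus M"
  shows "(\<integral>\<^sup>+t. indicator {0..} t * ennreal (tail M t) \<partial>lborel) = (\<integral>\<^sup>+x. ennreal x \<partial>M)"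
proof -
  interpret prob_space M using assms by (simp add: prob_on_Rplus_def)
  have sM: "sets M = sets borel" using assms by (simp add: prob_on_Rplus_def)
  interpret pair_sigma_finite lborel M
    by (simp add: pair_sigma_finite_def lborel.sigma_finite_measure_axioms sigma_finite_measure_axioms)
  define E where "E = (\<lambda>t x::real. indicator {0..} t * indicator {t<..} x :: ennreal)"
  have "(\<lambda>(t, x). E t x) = (\<lambda>(t, x). indicator {0..} t * (if t < x then 1 else 0))"
    by (auto simp: E_def fun_eq_iff indicator_def)
  then have "(\<lambda>(t, x). E t x) \<in> borel_measurable (borel \<Otimes>\<^sub>M borel)"
    by simp measurable
  then have E_meas: "(\<lambda>(t, x). E t x) \<in> borel_measurable (lborel \<Otimes>\<^sub>M M)"
    by (subst measurable_cong_sets[OF sets_pair_measure_cong[OF sets_lborel sM] refl])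
  have "(\<integral>\<^sup>+t. indicator {0..} t * ennreal (tail M t) \<partial>lborel)
      = (\<integral>\<^sup>+t. (\<integral>\<^sup>+x. E t x \<partial>M) \<partial>lborel)"
    using sM by (intro nn_integral_cong) (simp add: E_def nn_integral_cmult tail_def emeasure_eq_measure)
  also have "\<dots> = (\<integral>\<^sup>+x. (\<integral>\<^sup>+t. E t x \<partial>lborel) \<partial>M)"
    using Fubini'[OF E_meas] by simp
  also have "\<dots> = (\<integral>\<^sup>+x. ennreal x \<partial>M)"
  proof (intro nn_integral_cong)
    fix x :: real
    have "(\<lambda>t. E t x) = indicator {0..<x}"
      by (auto simp: E_def indicator_def fun_eq_iff)
    moreover have "emeasure lborel {0..<x} = ennreal x"
      by (cases "0 \<le> x") (auto simp: ennreal_neg)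
    ultimately show "(\<integral>\<^sup>+t. E t x \<partial>lborel) = ennreal x"
      by simp
  qed
  finally show ?thesis .
qed

lemma has_bochner_integral_tail:
  assumes P: "prob_on_Rplus M" and I: "integrable M (\<lambda>x. x)"
  shows "has_bochner_integral lborel (\<lambda>t. indicator {0..} t *\<^sub>R tail M t) (\<integral>x. x \<partial>M)"
proof (rule has_bochner_integral_nn_integral)
  interpret prob_space M using P by (simp add: prob_on_Rplus_def)
  have "AE x in M. 0 \<le> x"
    by (rule AE_I[of _ _ "{..<0}"]) (use P in \<open>auto simp: prob_on_Rplus_def\<close>)
  then have mean: "(\<integral>\<^sup>+x. ennreal x \<partial>M) = ennreal (\<integral>x. x \<partial>M)" "0 \<le> (\<integral>x. x \<partial>M)"
    using I by (auto intro: nn_integral_eq_integral integral_nonneg_AE)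
  then show "0 \<le> (\<integral>x. x \<partial>M)" by simp
  show "(\<lambda>t. indicator {0..} t *\<^sub>R tail M t) \<in> borel_measurable lborel"
    using borel_measurable_tail[OF P] by measurable
  show "AE t in lborel. 0 \<le> indicator {0..} t *\<^sub>R tail M t"
    by (simp add: tail_nonneg)
  have "(\<integral>\<^sup>+t. ennreal (indicator {0..} t *\<^sub>R tail M t) \<partial>lborel)
      = (\<integral>\<^sup>+t. indicator {0..} t * ennreal (tail M t) \<partial>lborel)"
    by (intro nn_integral_cong) (auto simp: indicator_def)
  then show "(\<integral>\<^sup>+t. ennreal (indicator {0..} t *\<^sub>R tail M t) \<partial>lborel) = ennreal (\<integral>x. x \<partial>M)"
    using nn_integral_tail[OF P] mean by simp
qed

lemma mean_le_moment_tail_bound: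
  assumes P: "prob_on_Rplus M" and I: "integrable M (\<lambda>x. x)" and I2: "integrable M (\<lambda>x. x\<^sup>2)"
    and a: "0 \<le> a" and B: "0 < B"
  shows "(\<integral>x. x \<partial>M) \<le> a + B * tail M a + (\<integral>x. x\<^sup>2 \<partial>M) / B"
proof -
  interpret prob_space M using P by (simp add: prob_on_Rplus_def)
  have A: "{a<..} \<in> sets M" using P by (simp add: prob_on_Rplus_def)
  have pointwise: "x \<le> a + B * indicator {a<..} x + x\<^sup>2 / B" for x :: real
  proof -
    have sq: "0 \<le> x\<^sup>2 / B" using B by simp
    have "x \<le> B + x\<^sup>2 / B"
    proof (cases "B < x")
      case True
      then have "x \<le> x\<^sup>2 / B"
        using B by (simp add: pos_le_divide_eq power2_eq_square mult_left_mono)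
      then show ?thesis using B by linarith
    qed (use sq in linarith)
    then show ?thesis using a sq by (auto simp: indicator_def)
  qed
  have i1: "integrable M (\<lambda>x. B * indicator {a<..} x :: real)"
    using A by (intro integrable_mult_right integrable_real_indicator A) (simp add: less_top[symmetric])
  have "(\<integral>x. x \<partial>M) \<le> (\<integral>x. a + B * indicator {a<..} x + x\<^sup>2 / B \<partial>M)"
    using i1 I2 by (intro integral_mono I pointwise) auto
  also have "\<dots> = a + B * tail M a + (\<integral>x. x\<^sup>2 \<partial>M) / B"
    using A i1 I2 by (simp add: integral_add tail_def prob_space)
  finally show ?thesis .
qed

lemma set_integral_one_minus_cos:
  fixes u a :: real
  assumes "u \<noteq> 0" "0 \<le> a"
  shows "(LINT t:{0..a}|lborel. 1 - cos (u * t)) = a - sin (u * a) / u"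
proof -
  have "(LINT t:{0..a}|lborel. 1 - cos (u * t)) = (a - sin (u * a) / u) - (0 - sin (u * 0) / u)"
    unfolding set_lebesgue_integral_def
  proof (rule integral_FTC_atLeastAtMost[OF assms(2)])
    fix x :: real
    show "((\<lambda>t. t - sin (u * t) / u) has_vector_derivative 1 - cos (u * x)) (at x within {0..a})"
      unfolding has_real_derivative_iff_has_vector_derivative[symmetric]
      using assms(1) by (auto intro!: derivative_eq_intros)
    show "continuous_on {0..a} (\<lambda>t. 1 - cos (u * t))" by (intro continuous_intros)
  qed
  then show ?thesis by simp
qed

lemma sinc_bounded_away_from_1:
  fixes y0 :: real
  assumes "0 < y0"
  obtains d where "0 < d" "\<And>x. y0 \<le> x \<Longrightarrow> sin x / x \<le> 1 - d"
proof -
  \<comment> \<open>Beyond \<open>2\<close> the bound \<open>sin x / x \<le> 1/2\<close> is trivial; below it \<open>x - sin x\<close> is increasing.\<close>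
  define y where "y = min y0 2"
  have y: "0 < y" "y \<le> 2" "y \<le> y0" using assms by (auto simp: y_def)
  have "0 - sin 0 < y - sin y"
  proof (rule DERIV_pos_imp_increasing_open[OF y(1)])
    fix t :: real assume t: "0 < t" "t < y"
    have "cos t < cos 0" using t y pi_gt3 by (intro cos_monotone_0_pi) auto
    then show "\<exists>D. ((\<lambda>t. t - sin t) has_real_derivative D) (at t) \<and> 0 < D"
      by (auto intro!: derivative_eq_intros exI[of _ "1 - cos t"])
  qed (intro continuous_intros)
  then have d_pos: "0 < min (1/2) ((y - sin y) / 2)" by simp
  have "sin x / x \<le> 1 - min (1/2) ((y - sin y) / 2)" if x: "y0 \<le> x" for x
  proof (cases "2 \<le> x")
    case True
    have "sin x \<le> x / 2" using sin_le_one[of x] True by linarith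
    then have "sin x / x \<le> 1/2" using True by (simp add: divide_le_eq)
    then show ?thesis by linarith
  next
    case False
    have mono: "y - sin y \<le> x - sin x"
      by (rule DERIV_nonneg_imp_nondecreasing[of y x])
        (use x y in \<open>auto intro!: derivative_eq_intros exI[of _ "1 - cos _"]\<close>)
    have "(y - sin y) * x \<le> (x - sin x) * x"
      using mono x y by (intro mult_right_mono) auto
    also have "\<dots> \<le> (x - sin x) * 2"
      using sin_x_le_x[of x] x y False by (intro mult_left_mono) auto
    finally have "(y - sin y) / 2 \<le> 1 - sin x / x"
      using x y by (simp add: field_simps)
    then show ?thesis by linarith
  qed
  with d_pos that show thesis by blast
qed

lemma set_integral_one_minus_cos_lower:
  fixes \<theta> a :: real
  assumes "0 < \<theta>" "0 < a"
  obtains d where "0 < d"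
    "\<And>u. \<theta> \<le> \<bar>u\<bar> \<Longrightarrow> a * d \<le> (LINT t:{0..a}|lborel. 1 - cos (u * t))"
proof -
  obtain d where d: "0 < d" "\<And>x. \<theta> * a \<le> x \<Longrightarrow> sin x / x \<le> 1 - d"
    using sinc_bounded_away_from_1[of "\<theta> * a"] assms by auto
  have "a * d \<le> (LINT t:{0..a}|lborel. 1 - cos (u * t))" if u: "\<theta> \<le> \<bar>u\<bar>" for u
  proof -
    have u0: "u \<noteq> 0" using u assms by auto
    have "sin (u * a) / u = a * (sin (\<bar>u\<bar> * a) / (\<bar>u\<bar> * a))"
      using u0 assms by (cases "0 \<le> u") (auto simp: field_simps)
    also have "\<dots> \<le> a * (1 - d)"
      using d(2)[of "\<bar>u\<bar> * a"] u assms by (intro mult_left_mono mult_right_mono) auto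
    finally show ?thesis
      using set_integral_one_minus_cos[OF u0, of a] assms by (simp add: algebra_simps)
  qed
  with d(1) that show thesis by blast
qed

text \<open>The deficit \<open>1 - cos (u t) = 1 - Re e^(i u t)\<close> is nonnegative, so it may be integrated
  over \<open>[0, a]\<close> alone.\<close>

lemma Re_one_minus_set_integral_cexp_ge:
  fixes G T :: "real \<Rightarrow> real" and a c l u :: real
  assumes G_meas: "G \<in> borel_measurable borel"
    and T: "set_integrable lborel {0..} T"
    and G_nonneg: "\<And>t. 0 \<le> t \<Longrightarrow> 0 \<le> G t" and G_le: "\<And>t. 0 \<le> t \<Longrightarrow> G t \<le> T t"
    and G_ge: "\<And>t. 0 \<le> t \<Longrightarrow> t \<le> a \<Longrightarrow> c \<le> G t" and l: "0 \<le> l"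
  shows "1 - l * (LINT t:{0..}|lborel. T t) + l * (c * (LINT t:{0..a}|lborel. 1 - cos (u * t)))
      \<le> Re (1 - complex_of_real l * set_lebesgue_integral lborel {0..}
               (\<lambda>t. exp (\<i> * complex_of_real (u * t)) * complex_of_real (G t)))"
proof -
  define F where "F = (\<lambda>t. exp (\<i> * complex_of_real (u * t)) * complex_of_real (G t))"
  define H where "H = (\<lambda>t. (1 - cos (u * t)) * G t)"
  have cos_bounds: "0 \<le> 1 - cos (u * t)" "1 - cos (u * t) \<le> 2" for t
    using cos_le_one[of "u * t"] cos_ge_minus_one[of "u * t"] by linarith+
  have H_nonneg: "0 \<le> H t" if "0 \<le> t" for t
    using G_nonneg[OF that] cos_bounds[of t] by (simp add: H_def)
  have H_le: "H t \<le> 2 * T t" if "0 \<le> t" for t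
    using mult_mono[OF cos_bounds(2) G_le[OF that]] G_nonneg[OF that] by (simp add: H_def)
  have iT: "integrable lborel (\<lambda>t. indicator {0..} t * T t)"
    using T by (simp add: set_integrable_def)
  have iT2: "integrable lborel (\<lambda>t. 2 * (indicator {0..} t * T t))"
    using iT by simp
  have iG: "integrable lborel (\<lambda>t. indicator {0..} t * G t)"
    by (rule Bochner_Integration.integrable_bound[OF iT])
      (use G_meas G_nonneg in \<open>auto simp: indicator_def intro!: AE_I2 order_trans[OF G_le abs_ge_self]\<close>)
  have iH: "integrable lborel (\<lambda>t. indicator {0..} t * H t)"
    by (rule Bochner_Integration.integrable_bound[OF iT2])
      (use G_meas H_nonneg in \<open>auto simp: H_def indicator_def
        intro!: AE_I2 order_trans[OF H_le[unfolded H_def] abs_ge_self]\<close>)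
  have iHa: "integrable lborel (\<lambda>t. indicator {0..a} t * H t)"
    by (rule Bochner_Integration.integrable_bound[OF iT2])
      (use G_meas H_nonneg in \<open>auto simp: H_def indicator_def
        intro!: AE_I2 order_trans[OF H_le[unfolded H_def] abs_ge_self]\<close>)
  have iCa: "integrable lborel (\<lambda>t. indicator {0..a} t * (c * (1 - cos (u * t))))"
    using borel_integrable_atLeastAtMost'[of 0 a "\<lambda>t. c * (1 - cos (u * t))"]
    by (simp add: set_integrable_def continuous_intros)
  have iF: "integrable lborel (\<lambda>t. indicator {0..} t *\<^sub>R F t)"
    by (rule Bochner_Integration.integrable_bound[OF iG])
      (use G_meas G_nonneg in \<open>auto simp: F_def indicator_def norm_mult\<close>)
  have "Re (set_lebesgue_integral lborel {0..} F) = (LINT t|lborel. Re (indicator {0..} t *\<^sub>R F t))"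
    unfolding set_lebesgue_integral_def by (rule integral_bounded_linear[OF bounded_linear_Re iF, symmetric])
  also have "\<dots> = (LINT t|lborel. indicator {0..} t * G t - indicator {0..} t * H t)"
    by (intro Bochner_Integration.integral_cong) (auto simp: F_def H_def Re_exp algebra_simps)
  also have "\<dots> = (LINT t|lborel. indicator {0..} t * G t) - (LINT t|lborel. indicator {0..} t * H t)"
    by (rule Bochner_Integration.integral_diff[OF iG iH])
  finally have Re_eq: "Re (set_lebesgue_integral lborel {0..} F) = \<dots>" .
  have "(LINT t|lborel. indicator {0..} t * G t) \<le> (LINT t|lborel. indicator {0..} t * T t)"
    by (intro integral_mono iG iT) (use G_le in \<open>auto simp: indicator_def\<close>)
  then have J1_le: "(LINT t|lborel. indicator {0..} t * G t) \<le> (LINT t:{0..}|lborel. T t)"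
    by (simp add: set_lebesgue_integral_def)
  have J2_ge: "c * (LINT t:{0..a}|lborel. 1 - cos (u * t)) \<le> (LINT t|lborel. indicator {0..} t * H t)"
  proof -
    have "c * (LINT t:{0..a}|lborel. 1 - cos (u * t))
        = (LINT t|lborel. indicator {0..a} t * (c * (1 - cos (u * t))))"
      by (simp add: set_lebesgue_integral_def ac_simps)
    also have "\<dots> \<le> (LINT t|lborel. indicator {0..a} t * H t)"
      by (intro integral_mono iCa iHa)
        (use G_ge cos_bounds in \<open>auto simp: H_def indicator_def mult.commute intro: mult_right_mono\<close>)
    also have "\<dots> \<le> (LINT t|lborel. indicator {0..} t * H t)"
      by (intro integral_mono iHa iH) (use H_nonneg in \<open>auto simp: indicator_def\<close>)
    finally show ?thesis .
  qed
  have "Re (1 - complex_of_real l * set_lebesgue_integral lborel {0..} F)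
      = 1 - l * (LINT t|lborel. indicator {0..} t * G t) + l * (LINT t|lborel. indicator {0..} t * H t)"
    by (simp add: Re_eq right_diff_distrib)
  also have "\<dots> \<ge> 1 - l * (LINT t:{0..}|lborel. T t) + l * (c * (LINT t:{0..a}|lborel. 1 - cos (u * t)))"
    using mult_left_mono[OF J1_le l] mult_left_mono[OF J2_ge l] by linarith
  finally show ?thesis by (simp add: F_def)
qed

lemma power_one_minus_le_quadratic:
  fixes s :: real
  assumes "0 \<le> s" "s \<le> 1"
  shows "(1 - s) ^ k \<le> 1 - real k * s + (real k)\<^sup>2 * s\<^sup>2"
proof (induction k)
  case (Suc k)
  have "(1 - s) ^ Suc k \<le> (1 - s) * (1 - real k * s + (real k)\<^sup>2 * s\<^sup>2)"
    using Suc assms by (simp add: mult_left_mono)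
  also have "\<dots> \<le> 1 - real (Suc k) * s + (real (Suc k))\<^sup>2 * s\<^sup>2"
  proof -
    have "0 \<le> (real k)\<^sup>2 * s ^ 3 + real k * s\<^sup>2 + s\<^sup>2" using assms by simp
    then show ?thesis by (simp add: algebra_simps power2_eq_square power3_eq_cube)
  qed
  finally show ?case .
qed simp

lemma summable_pgf:
  assumes "prob_on_Zplus p" "\<bar>x\<bar> \<le> 1"
  shows "summable (\<lambda>k. p k * x ^ k)"
proof (rule summable_comparison_test)
  have p: "\<And>k. 0 \<le> p k" "summable p" using assms(1) by (auto simp: prob_on_Zplus_def sums_iff)
  show "\<exists>N. \<forall>k\<ge>N. norm (p k * x ^ k) \<le> p k"
    using p assms(2) by (auto simp: abs_mult power_abs intro!: mult_left_le power_le_one)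
  show "summable p" by (rule p)
qed

lemma pgf_1: "prob_on_Zplus p \<Longrightarrow> pgf p 1 = 1"
  by (simp add: pgf_def prob_on_Zplus_def sums_iff)

lemma mean_Z_ge_1:
  assumes P: "prob_on_Zplus p" and S: "summable (\<lambda>k. real k * p k)"
  shows "1 \<le> mean_Z p"
proof -
  have p0: "\<And>k. p k \<ge> 0" and pz: "p 0 = 0" and ps: "p sums 1"
    using P by (auto simp: prob_on_Zplus_def)
  have "suminf p \<le> (\<Sum>k. real k * p k)"
  proof (rule suminf_le)
    show "p k \<le> real k * p k" for k
      using p0[of k] pz by (cases k) (auto simp: algebra_simps)
  qed (use ps S in \<open>auto simp: sums_iff\<close>)
  then show ?thesis using ps by (simp add: mean_Z_def sums_iff)
qed

lemma partial_mean_le_one_minus_pgf: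
  assumes P: "prob_on_Zplus p" and s: "0 \<le> s" "s \<le> 1"
  shows "s * (\<Sum>k<K. real k * p k) - s\<^sup>2 * (\<Sum>k<K. (real k)\<^sup>2 * p k) \<le> 1 - pgf p (1 - s)"
proof -
  have p0: "\<And>k. 0 \<le> p k" and sp: "summable p" "suminf p = 1"
    using P by (auto simp: prob_on_Zplus_def sums_iff)
  have sG: "summable (\<lambda>k. p k * (1 - s) ^ k)" using summable_pgf[OF P] s by simp
  have "s * (\<Sum>k<K. real k * p k) - s\<^sup>2 * (\<Sum>k<K. (real k)\<^sup>2 * p k)
      = (\<Sum>k<K. p k * (real k * s - (real k)\<^sup>2 * s\<^sup>2))"
    by (simp add: sum_distrib_left sum_subtractf algebra_simps)
  also have "\<dots> \<le> (\<Sum>k<K. p k * (1 - (1 - s) ^ k))"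
    using power_one_minus_le_quadratic[OF s] p0 by (intro sum_mono mult_left_mono) (auto simp: algebra_simps)
  also have "\<dots> \<le> (\<Sum>k. p k * (1 - (1 - s) ^ k))"
  proof (rule sum_le_suminf)
    show "summable (\<lambda>k. p k * (1 - (1 - s) ^ k))"
      using summable_diff[OF sp(1) sG] by (simp add: algebra_simps)
    show "0 \<le> p k * (1 - (1 - s) ^ k)" for k
      using p0 s by (auto intro!: mult_nonneg_nonneg power_le_one)
  qed simp
  also have "\<dots> = 1 - pgf p (1 - s)"
    using suminf_diff[OF sp(1) sG] sp(2) by (simp add: pgf_def algebra_simps)
  finally show ?thesis .
qed

text \<open>The slope of \<open>1 - pgf p (1 - s)\<close> at \<open>s = 0\<close> is the mean; letting \<open>s \<rightarrow> 0\<close> in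
  \<open>partial_mean_le_one_minus_pgf\<close> bounds every partial sum of the mean by \<open>C\<close>.\<close>

lemma mean_Z_le_of_pgf_bound:
  assumes P: "prob_on_Zplus p" and S: "summable (\<lambda>k. real k * p k)" and "0 < \<delta>"
    and bound: "\<And>s. 0 < s \<Longrightarrow> s \<le> \<delta> \<Longrightarrow> 1 - pgf p (1 - s) \<le> s * C"
  shows "mean_Z p \<le> C"
  unfolding mean_Z_def
proof (rule suminf_le_const[OF S])
  fix K
  define Q where "Q = (\<Sum>k<K. (real k)\<^sup>2 * p k)"
  have "\<forall>\<^sub>F s in at_right 0. s \<in> {0<..<min \<delta> 1}"
    using \<open>0 < \<delta>\<close> by (intro eventually_at_right_real) simp
  then have "\<forall>\<^sub>F s in at_right 0. (\<Sum>k<K. real k * p k) \<le> C + s * Q"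
  proof (rule eventually_mono)
    fix s assume "s \<in> {0<..<min \<delta> 1}"
    then have s: "0 < s" "s \<le> \<delta>" "s \<le> 1" by auto
    have "s * ((\<Sum>k<K. real k * p k) - s * Q) \<le> s * C"
      using partial_mean_le_one_minus_pgf[OF P, of s K] bound[OF s(1,2)] s
      by (simp add: Q_def algebra_simps power2_eq_square)
    then have "(\<Sum>k<K. real k * p k) - s * Q \<le> C"
      using s(1) by (rule mult_left_le_imp_le)
    then show "(\<Sum>k<K. real k * p k) \<le> C + s * Q" by simp
  qed
  moreover have "((\<lambda>s. C + s * Q) \<longlongrightarrow> C + 0 * Q) (at_right 0)"
    by (intro tendsto_intros)
  ultimately show "(\<Sum>k<K. real k * p k) \<le> C"
    by (intro tendsto_lowerbound[where F = "at_right 0"]) auto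
qed

lemma one_minus_pgf_le_of_phi_lipschitz:
  fixes p :: "nat \<Rightarrow> real" and g L s :: real and n :: nat
  assumes P: "prob_on_Zplus p" and n: "1 \<le> n" and g: "0 < g"
    and Lip: "\<forall>z1\<in>{0..1}. \<forall>z2\<in>{0..1}. z1 \<le> real n \<longrightarrow> z2 \<le> real n \<longrightarrow>
              \<bar>phi_n p g n z1 - phi_n p g n z2\<bar> \<le> L * \<bar>z1 - z2\<bar>"
    and s: "0 < s" "s \<le> 1 / real n"
  shows "1 - pgf p (1 - s) \<le> s * (1 + L / g)"
proof -
  define z where "z = s * real n"
  have "s \<le> 1"
    using s n by (smt (verit) divide_le_eq_1 of_nat_1 of_nat_mono)
  then have z: "0 \<le> z" "z \<le> 1" "z \<le> real n" and zs: "z / real n = s"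
    using s n by (auto simp: z_def field_simps)
  have "phi_n p g n 0 = 0" by (simp add: phi_n_def pgf_1[OF P])
  then have "- phi_n p g n z \<le> L * z"
    using Lip z by (smt (verit) atLeastAtMost_iff of_nat_0_le_iff)
  then have "real n * g * (1 - pgf p (1 - s) - s) \<le> real n * g * (L * s / g)"
    using g n by (simp add: phi_n_def zs z_def algebra_simps)
  then have "1 - pgf p (1 - s) - s \<le> L * s / g"
    using g n by (simp add: mult_le_cancel_left_pos pos_le_divide_eq mult.commute)
  then show ?thesis by (simp add: algebra_simps)
qed

lemma mean_Z_le_of_phi_lipschitz:
  fixes p :: "nat \<Rightarrow> real" and g L :: real and n :: nat
  assumes P: "prob_on_Zplus p" and S: "summable (\<lambda>k. real k * p k)" and n: "1 \<le> n" and g: "0 < g"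
    and Lip: "\<forall>z1\<in>{0..1}. \<forall>z2\<in>{0..1}. z1 \<le> real n \<longrightarrow> z2 \<le> real n \<longrightarrow>
              \<bar>phi_n p g n z1 - phi_n p g n z2\<bar> \<le> L * \<bar>z1 - z2\<bar>"
  shows "mean_Z p \<le> 1 + L / g"
  using n by (intro mean_Z_le_of_pgf_bound[OF P S, of "1 / real n"]
      one_minus_pgf_le_of_phi_lipschitz[OF P n g Lip]) auto

lemma eventually_tail_lower_bound:
  fixes M :: "'a \<Rightarrow> real measure"
  assumes M: "\<forall>\<^sub>F n in F. prob_on_Rplus (M n) \<and> integrable (M n) (\<lambda>y. y) \<and> integrable (M n) (\<lambda>y. y\<^sup>2)"
    and mean: "((\<lambda>n. \<integral>y. y \<partial>M n) \<longlongrightarrow> \<eta>) F" "0 < \<eta>"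
    and moment2: "((\<lambda>n. \<integral>y. y\<^sup>2 \<partial>M n) \<longlongrightarrow> s) F"
  obtains a c where "0 < a" "0 < c" "\<forall>\<^sub>F n in F. c \<le> tail (M n) a"
proof -
  define a where "a = \<eta> / 4"
  define B where "B = 4 * (\<bar>s\<bar> + 1) / \<eta>"
  have a: "0 < a" and B: "0 < B" using mean(2) by (auto simp: a_def B_def)
  have "\<forall>\<^sub>F n in F. 3 * \<eta> / 4 < (\<integral>y. y \<partial>M n)"
    using mean by (intro order_tendstoD(1)) auto
  moreover have "\<forall>\<^sub>F n in F. (\<integral>y. y\<^sup>2 \<partial>M n) < \<bar>s\<bar> + 1"
    using moment2 by (intro order_tendstoD(2)) auto
  ultimately have "\<forall>\<^sub>F n in F. \<eta> / (4 * B) \<le> tail (M n) a"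
    using M
  proof eventually_elim
    case (elim n)
    have "(\<integral>y. y\<^sup>2 \<partial>M n) / B \<le> (\<bar>s\<bar> + 1) / B"
      using elim B by (intro divide_right_mono) auto
    also have "\<dots> = \<eta> / 4"
      using mean(2) abs_ge_zero[of s] by (simp add: B_def field_simps)
    finally have "(\<integral>y. y\<^sup>2 \<partial>M n) / B \<le> \<eta> / 4" .
    moreover have "(\<integral>y. y \<partial>M n) \<le> a + B * tail (M n) a + (\<integral>y. y\<^sup>2 \<partial>M n) / B"
      using mean_le_moment_tail_bound[of "M n" a B] elim a B by auto
    ultimately have "\<eta> / 4 \<le> B * tail (M n) a"
      using elim unfolding a_def by linarith
    then show ?case using B by (simp add: pos_divide_le_eq ac_simps)
  qed
  moreover have "0 < \<eta> / (4 * B)" using mean(2) B by simp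
  ultimately show thesis using a that by blast
qed

lemma cmod_one_minus_fourier_tail_ge:
  fixes M :: "real measure" and \<beta> g l lmin a c d e u :: real
  assumes P: "prob_on_Rplus M" and I: "integrable M (\<lambda>x. x)"
    and \<beta>: "0 \<le> \<beta>" and g: "1 \<le> g" and a: "0 \<le> a" and c: "0 \<le> c" "c \<le> tail M a"
    and l: "0 \<le> lmin" "lmin \<le> l" "l * (\<integral>x. x \<partial>M) \<le> 1 + e"
    and d: "0 \<le> d" "a * d \<le> (LINT t:{0..a}|lborel. 1 - cos (u * t))"
    and e: "2 * e \<le> lmin * (exp (- \<beta> * a) * c * (a * d))"
  shows "e \<le> cmod (1 - complex_of_real l * set_lebesgue_integral lborel {0..}
               (\<lambda>t. exp (\<i> * complex_of_real (u * t)) * complex_of_real (exp (- \<beta> * t / g) * tail M t)))"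
proof -
  have T: "set_integrable lborel {0..} (tail M)" "(LINT t:{0..}|lborel. tail M t) = (\<integral>x. x \<partial>M)"
    using has_bochner_integral_tail[OF P I]
    by (auto simp: set_integrable_def set_lebesgue_integral_def has_bochner_integral_iff)
  have meas: "(\<lambda>t. exp (- \<beta> * t / g) * tail M t) \<in> borel_measurable borel"
    using borel_measurable_tail[OF P] by measurable
  have G_le: "exp (- \<beta> * t / g) * tail M t \<le> tail M t" if "0 \<le> t" for t
    using \<beta> g that by (intro mult_left_le_one_le) (auto simp: tail_nonneg)
  have G_ge: "exp (- \<beta> * a / g) * c \<le> exp (- \<beta> * t / g) * tail M t" if "0 \<le> t" "t \<le> a" for t
    using \<beta> g c tail_antimono[OF P \<open>t \<le> a\<close>] that
    by (intro mult_mono) (auto simp: divide_right_mono mult_left_mono tail_nonneg)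
  have "exp (- \<beta> * a) * c * (a * d) \<le> exp (- \<beta> * a / g) * c * (LINT t:{0..a}|lborel. 1 - cos (u * t))"
  proof (intro mult_mono d(2))
    have "\<beta> * a * 1 \<le> \<beta> * a * g" using \<beta> a g by (intro mult_left_mono) auto
    then show "exp (- \<beta> * a) \<le> exp (- \<beta> * a / g)" using g by (simp add: divide_le_eq)
  qed (use a c d in auto)
  then have "2 * e \<le> l * (exp (- \<beta> * a / g) * c * (LINT t:{0..a}|lborel. 1 - cos (u * t)))"
    using e l a c d by (smt (verit) mult_mono mult_nonneg_nonneg exp_ge_zero)
  moreover have "1 - l * (\<integral>x. x \<partial>M) + l * (exp (- \<beta> * a / g) * c * (LINT t:{0..a}|lborel. 1 - cos (u * t)))
      \<le> Re (1 - complex_of_real l * set_lebesgue_integral lborel {0..}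
               (\<lambda>t. exp (\<i> * complex_of_real (u * t)) * complex_of_real (exp (- \<beta> * t / g) * tail M t)))"
    using Re_one_minus_set_integral_cexp_ge[OF meas T(1) _ G_le G_ge] T(2) l
    by (simp add: tail_nonneg)
  ultimately show ?thesis
    using l(3) complex_Re_le_cmod by (smt (verit))
qed

lemma tendsto_1_of_scaled_defect:
  fixes g x :: "'a \<Rightarrow> real"
  assumes "((\<lambda>n. g n * (1 - x n)) \<longlongrightarrow> b) F" and g: "filterlim g at_top F"
  shows "(x \<longlongrightarrow> 1) F"
proof -
  have "((\<lambda>n. g n * (1 - x n) * inverse (g n)) \<longlongrightarrow> b * 0) F"
    by (intro tendsto_mult assms(1) tendsto_inverse_0_at_top g)
  moreover have "\<forall>\<^sub>F n in F. 0 < g n"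
    using g filterlim_at_top_dense by blast
  then have "\<forall>\<^sub>F n in F. g n * (1 - x n) * inverse (g n) = 1 - x n"
    by eventually_elim simp
  ultimately have "((\<lambda>n. 1 - x n) \<longlongrightarrow> 0) F"
    by (simp add: tendsto_cong)
  then have "((\<lambda>n. 1 - (1 - x n)) \<longlongrightarrow> 1 - 0) F"
    by (intro tendsto_diff tendsto_const)
  then show ?thesis by simp
qed

lemma eventually_lam_mean_Z_bounds:
  fixes lam eta gam :: "nat \<Rightarrow> real" and p :: "nat \<Rightarrow> nat \<Rightarrow> real"
  assumes p: "\<forall>n\<ge>1. prob_on_Zplus (p n)" "\<forall>n\<ge>1. summable (\<lambda>k. real k * p n k)"
    and gam: "\<forall>n\<ge>1. 0 < gam n" "filterlim gam at_top sequentially"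
    and Lip: "\<forall>n\<ge>1. \<forall>z1\<in>{0..1}. \<forall>z2\<in>{0..1}. z1 \<le> real n \<longrightarrow> z2 \<le> real n \<longrightarrow>
      \<bar>phi_n (p n) (gam n) n z1 - phi_n (p n) (gam n) n z2\<bar> \<le> L * \<bar>z1 - z2\<bar>"
    and lam: "lam \<longlonglongrightarrow> lam0" "0 < lam0" and eta: "\<forall>\<^sub>F n in sequentially. 0 < eta n"
    and defect: "(\<lambda>n. gam n * (1 - lam n * eta n)) \<longlonglongrightarrow> b" and e: "0 < e"
  shows "\<forall>\<^sub>F n in sequentially. lam0 / 2 \<le> lam n * mean_Z (p n) \<and> lam n * mean_Z (p n) * eta n \<le> 1 + e"
proof -
  have "(\<lambda>n. L / gam n) \<longlonglongrightarrow> 0"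
    by (rule tendsto_divide_0[OF tendsto_const filterlim_at_top_imp_at_infinity[OF gam(2)]])
  then have "(\<lambda>n. lam n * eta n * (1 + L / gam n)) \<longlonglongrightarrow> 1 * (1 + 0)"
    by (intro tendsto_intros tendsto_1_of_scaled_defect[OF defect gam(2)])
  then have "\<forall>\<^sub>F n in sequentially. lam n * eta n * (1 + L / gam n) < 1 + e"
    using e by (intro order_tendstoD(2)) auto
  moreover have "\<forall>\<^sub>F n in sequentially. lam0 / 2 < lam n"
    using lam by (intro order_tendstoD(1)) auto
  ultimately show ?thesis
    using eta eventually_ge_at_top[of 1]
  proof eventually_elim
    case (elim n)
    have m: "1 \<le> mean_Z (p n)" "mean_Z (p n) \<le> 1 + L / gam n"
      using mean_Z_ge_1 mean_Z_le_of_phi_lipschitz[of "p n" n "gam n" L] p gam Lip elim by auto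
    have lam_n: "0 < lam n" using elim lam(2) by auto
    have "lam n * 1 \<le> lam n * mean_Z (p n)"
      using m lam_n by (intro mult_left_mono) auto
    moreover have "lam n * eta n * mean_Z (p n) \<le> lam n * eta n * (1 + L / gam n)"
      using m lam_n elim by (intro mult_left_mono) auto
    moreover have "lam n * mean_Z (p n) * eta n = lam n * eta n * mean_Z (p n)"
      by (simp add: ac_simps)
    ultimately show ?case
      using elim by linarith
  qed
qed

lemma threshold_of_eventually_lower_bound:
  fixes f :: "nat \<Rightarrow> real \<Rightarrow> real"
  assumes "\<And>\<theta>. 0 < \<theta> \<Longrightarrow> \<exists>e>0. \<forall>\<^sub>F n in sequentially. \<forall>u. \<theta> \<le> \<bar>u\<bar> \<longrightarrow> e \<le> f n u"
  shows "\<forall>\<theta>>0. \<exists>N\<ge>1. \<exists>\<epsilon>>0. \<forall>n\<ge>N. \<forall>u. \<bar>u\<bar> \<ge> \<theta> \<longrightarrow> f n u \<ge> \<epsilon>"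
  using assms unfolding eventually_sequentially by (metis max.cobounded1 max.cobounded2 order_trans)

theorem proposition5p10:
  fixes lam :: "nat \<Rightarrow> real" and Lam :: "nat \<Rightarrow> real measure"
    and p q :: "nat \<Rightarrow> nat \<Rightarrow> real" and gam :: "nat \<Rightarrow> real"
    and gam_star lam0 eta0 sig0 b \<alpha> \<beta> :: real
    and \<psi> \<phi> :: "real \<Rightarrow> real"
  defines "eta \<equiv> (\<lambda>n. \<integral>y. y \<partial>(Lam n))"
      and "sig \<equiv> (\<lambda>n. (1/2) * (\<integral>y. y\<^sup>2 \<partial>(Lam n)))"
      and "mm \<equiv> (\<lambda>n. mean_Z (p n))"
  assumes \<comment> \<open>standing assumptions\<close>
    lam_pos: "\<forall>n\<ge>1. lam n > 0"
    and Lam_prob: "\<forall>n\<ge>1. prob_on_Rplus (Lam n)"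
    and Lam_mom: "\<forall>n\<ge>1. integrable (Lam n) (\<lambda>y. y) \<and> integrable (Lam n) (\<lambda>y. y\<^sup>2)"
    and p_prob: "\<forall>n\<ge>1. prob_on_Zplus (p n)"
    and q_prob: "\<forall>n\<ge>1. prob_on_Zplus (q n)"
    and p_mean: "\<forall>n\<ge>1. summable (\<lambda>k. real k * p n k)"
    and gam_pos: "\<forall>n\<ge>1. gam n > 0"
    and gam_inf: "filterlim gam at_top sequentially"
    and gam_star: "gam_star \<ge> 0" "(\<lambda>n. gam n / real n) \<longlonglongrightarrow> gam_star"
    \<comment> \<open>Condition 1 (i)\<close>
    and C1_lam: "lam \<longlonglongrightarrow> lam0" "lam0 > 0"
    and C1_eta: "eta \<longlonglongrightarrow> eta0" "eta0 > 0"
    and C1_sig: "sig \<longlonglongrightarrow> sig0" "sig0 > 0"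
    and C1_b: "(\<lambda>n. gam n * (1 - lam n * eta n)) \<longlonglongrightarrow> b"
    \<comment> \<open>Condition 1 (ii): uniform convergence on compacts of [0,\<infinity>)\<close>
    and C1_psi: "\<forall>K>0. \<forall>e>0. \<forall>\<^sub>F n in sequentially.
                   \<forall>z\<in>{0..K}. \<bar>psi_n (q n) (gam n) n z - \<psi> z\<bar> < e"
    \<comment> \<open>Condition 1 (iii)\<close>
    and C1_phi_lip: "\<forall>K>0. \<exists>L. \<forall>n\<ge>1. \<forall>z1\<in>{0..K}. \<forall>z2\<in>{0..K}.
                   z1 \<le> real n \<longrightarrow> z2 \<le> real n \<longrightarrow>
                   \<bar>phi_n (p n) (gam n) n z1 - phi_n (p n) (gam n) n z2\<bar> \<le> L * \<bar>z1 - z2\<bar>"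
    and C1_phi_conv: "\<forall>K>0. \<forall>e>0. \<forall>\<^sub>F n in sequentially.
                   \<forall>z\<in>{0..K}. \<bar>phi_n (p n) (gam n) n z - \<phi> z\<bar> < e"
    and C1_phi_cont: "continuous_on {0..} \<phi>"
    \<comment> \<open>Condition 2\<close>
    and C2_alpha: "1 < \<alpha>" "\<alpha> < 2"
    and C2_1a: "\<exists>C>0. \<exists>k0>0. \<forall>n\<ge>1.
                 summable (\<lambda>k. if real k \<ge> k0 then (real k / real n) powr \<alpha> * p n k else 0)
               \<and> summable (\<lambda>k. real k powr \<alpha> * q n k)
               \<and> real n * gam n * (\<Sum>k. if real k \<ge> k0 then (real k / real n) powr \<alpha> * p n k else 0)
                   + (\<Sum>k. real k powr \<alpha> * q n k) \<le> C"
    and C2_1b: "(\<lambda>k1. limsup (\<lambda>n. ereal (gam n * (\<Sum>k. if k \<ge> k1 then real k * p n k else 0))))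
                 \<longlonglongrightarrow> 0"
    and C2_2: "\<exists>C0>0. \<exists>LamS. prob_on_Rplus LamS \<and> integrable LamS (\<lambda>t. t powr (2 * \<alpha>))
                 \<and> (\<forall>n\<ge>1. \<forall>t\<ge>0. tail (Lam n) t \<le> C0 * tail LamS t)"
    \<comment> \<open>choice of beta, with m = lim gam n * (1 - m(n))\<close>
    and beta: "\<beta> \<ge> 0"
              "\<beta> > - (b + lim (\<lambda>n. gam n * (1 - mm n))) / (sig0 * lam0)"
  shows "\<forall>\<theta>>0. \<exists>n_theta\<ge>1. \<exists>\<epsilon>>0. \<forall>n\<ge>n_theta. \<forall>u::real. \<bar>u\<bar> \<ge> \<theta> \<longrightarrow>
           cmod (1 - complex_of_real (lam n * mm n) *
              set_lebesgue_integral lborel {0..}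
                (\<lambda>t. exp (\<i> * complex_of_real (u * t)) *
                     complex_of_real (exp (- \<beta> * t / gam n) * tail (Lam n) t))) \<ge> \<epsilon>"
proof -
  have "\<exists>eps>0. \<forall>\<^sub>F n in sequentially. \<forall>u. \<theta> \<le> \<bar>u\<bar> \<longrightarrow> eps \<le> cmod (1 - complex_of_real (lam n * mm n) *
      set_lebesgue_integral lborel {0..} (\<lambda>t. exp (\<i> * complex_of_real (u * t)) *
        complex_of_real (exp (- \<beta> * t / gam n) * tail (Lam n) t)))" if \<theta>: "0 < \<theta>" for \<theta>
  proof -
    obtain L where L: "\<forall>n\<ge>1. \<forall>z1\<in>{0..1}. \<forall>z2\<in>{0..1}. z1 \<le> real n \<longrightarrow> z2 \<le> real n \<longrightarrow>
        \<bar>phi_n (p n) (gam n) n z1 - phi_n (p n) (gam n) n z2\<bar> \<le> L * \<bar>z1 - z2\<bar>"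
      using C1_phi_lip[rule_format, of 1] by auto
    have "(\<lambda>n. \<integral>y. y\<^sup>2 \<partial>Lam n) \<longlonglongrightarrow> 2 * sig0"
      using tendsto_mult_left[OF C1_sig(1), of 2] by (simp add: sig_def)
    moreover have "\<forall>\<^sub>F n in sequentially. prob_on_Rplus (Lam n) \<and> integrable (Lam n) (\<lambda>y. y) \<and> integrable (Lam n) (\<lambda>y. y\<^sup>2)"
      using eventually_ge_at_top[of 1] by eventually_elim (use Lam_prob Lam_mom in auto)
    ultimately obtain a c where a: "0 < a" and c: "0 < c" and tail: "\<forall>\<^sub>F n in sequentially. c \<le> tail (Lam n) a"
      using eventually_tail_lower_bound[where F = sequentially and M = Lam and \<eta> = eta0] C1_eta unfolding eta_def by blast
    obtain d where d: "0 < d" "\<And>u. \<theta> \<le> \<bar>u\<bar> \<Longrightarrow> a * d \<le> (LINT t:{0..a}|lborel. 1 - cos (u * t))"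
      using set_integral_one_minus_cos_lower[OF \<theta> a] by blast
    define eps where "eps = lam0 / 2 * (exp (- \<beta> * a) * c * (a * d)) / 2"
    have eps: "0 < eps" using C1_lam c a d by (simp add: eps_def)
    have "\<forall>\<^sub>F n in sequentially. 0 < eta n"
      using C1_eta by (intro order_tendstoD(1)) auto
    with eventually_lam_mean_Z_bounds[OF p_prob p_mean gam_pos gam_inf L C1_lam _ C1_b \<open>0 < eps\<close>]
    have "\<forall>\<^sub>F n in sequentially. lam0 / 2 \<le> lam n * mm n \<and> lam n * mm n * (\<integral>x. x \<partial>Lam n) \<le> 1 + eps"
      by (simp add: mm_def eta_def)
    then have "\<forall>\<^sub>F n in sequentially. \<forall>u. \<theta> \<le> \<bar>u\<bar> \<longrightarrow> eps \<le> cmod (1 - complex_of_real (lam n * mm n) *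
        set_lebesgue_integral lborel {0..} (\<lambda>t. exp (\<i> * complex_of_real (u * t)) *
          complex_of_real (exp (- \<beta> * t / gam n) * tail (Lam n) t)))"
      using tail eventually_ge_at_top[of 1] filterlim_at_top[THEN iffD1, OF gam_inf, rule_format, of 1]
    proof eventually_elim
      case (elim n)
      then have "prob_on_Rplus (Lam n)" "integrable (Lam n) (\<lambda>x. x)"
        using Lam_prob Lam_mom by auto
      with elim show ?case
        using a c d(1) beta(1) C1_lam(2)
        by (intro allI impI cmod_one_minus_fourier_tail_ge[where lmin = "lam0 / 2" and a = a and c = c and d = d])
          (simp_all add: eps_def, erule d(2))
    qed
    with eps show ?thesis by (intro exI[of _ eps] conjI)
  qed
  then show ?thesis
    by (rule threshold_of_eventually_lower_bound)
qed

end
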